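(* Let $P$ be a countable multiset of primes, $G=\bigoplus_{p\in P}\mathbb{F}_p$, let $X$ be an ergodic $G$-system, let $F:X\to S^1$ be a phase polynomial of degree $<k$, and let $p$ be a prime with $p\geq k$. Suppose $F$ takes values in $C_{p^m}$ for some $m\in\mathbb{N}$. Then there is a constant $c\in S^1$ such that $cF$ takes values in $C_p$.
   Context: $C_r$ is the group of $r$-th roots of unity. A $G$-system is a compact metrizable probability space with measure-preserving $G$-action $(T_g)$; ergodic: only constants invariant. Phase polynomial of degree $<k$: $\Delta_{h_1}\cdots\Delta_{h_k}F=1$ a.e. for all $h_i\in G$, where $\Delta_h\phi=(\phi\circ T_h)/\phi$. *)

theory Defs
  imports "HOL-Probability.Probability"
begin

text \<open>The countable multiset of primes P is given by an index set I (a subset of nat,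
  hence countable) and a labelling ps with ps i prime for i in I; repetitions allowed.
  The group G = direct sum over i in I of F_(ps i) is modelled as finitely supported
  functions g :: nat => int with 0 <= g i < ps i on I and g i = 0 off I.\<close>

definition G_set :: "nat set \<Rightarrow> (nat \<Rightarrow> nat) \<Rightarrow> (nat \<Rightarrow> int) set" where
  "G_set I ps = {g. (\<forall>i. i \<notin> I \<longrightarrow> g i = 0) \<and> (\<forall>i\<in>I. 0 \<le> g i \<and> g i < int (ps i))
                    \<and> finite {i. g i \<noteq> 0}}"

definition G_add :: "(nat \<Rightarrow> nat) \<Rightarrow> (nat \<Rightarrow> int) \<Rightarrow> (nat \<Rightarrow> int) \<Rightarrow> (nat \<Rightarrow> int)" where
  "G_add ps g h = (\<lambda>i. (g i + h i) mod int (ps i))"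

definition G_system :: "nat set \<Rightarrow> (nat \<Rightarrow> nat) \<Rightarrow> 'a::metric_space measure
      \<Rightarrow> ((nat \<Rightarrow> int) \<Rightarrow> 'a \<Rightarrow> 'a) \<Rightarrow> bool" where
  "G_system I ps M T \<longleftrightarrow>
     compact (UNIV :: 'a set) \<and> prob_space M \<and> sets M = sets borel \<and> space M = UNIV \<and>
     (\<forall>g\<in>G_set I ps. T g \<in> measurable M M \<and> distr M M (T g) = M) \<and>
     T (\<lambda>_. 0) = id \<and>
     (\<forall>g\<in>G_set I ps. \<forall>h\<in>G_set I ps. T (G_add ps g h) = T g \<circ> T h)"

definition ergodic :: "nat set \<Rightarrow> (nat \<Rightarrow> nat) \<Rightarrow> 'a::metric_space measure
      \<Rightarrow> ((nat \<Rightarrow> int) \<Rightarrow> 'a \<Rightarrow> 'a) \<Rightarrow> bool" where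
  "ergodic I ps M T \<longleftrightarrow>
     (\<forall>f :: 'a \<Rightarrow> complex. f \<in> borel_measurable M \<longrightarrow>
        (\<forall>g\<in>G_set I ps. AE x in M. f (T g x) = f x) \<longrightarrow> (\<exists>c. AE x in M. f x = c))"

definition Delta :: "((nat \<Rightarrow> int) \<Rightarrow> 'a \<Rightarrow> 'a) \<Rightarrow> (nat \<Rightarrow> int) \<Rightarrow> ('a \<Rightarrow> complex) \<Rightarrow> 'a \<Rightarrow> complex" where
  "Delta T h \<phi> = (\<lambda>x. \<phi> (T h x) / \<phi> x)"

text \<open>Phase polynomial of degree < k: measurable F : X -> S^1 with
  Delta_{h_1} ... Delta_{h_k} F = 1 a.e. for all h_1,...,h_k in G.\<close>

definition phase_poly :: "nat set \<Rightarrow> (nat \<Rightarrow> nat) \<Rightarrow> 'a::metric_space measure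
      \<Rightarrow> ((nat \<Rightarrow> int) \<Rightarrow> 'a \<Rightarrow> 'a) \<Rightarrow> nat \<Rightarrow> ('a \<Rightarrow> complex) \<Rightarrow> bool" where
  "phase_poly I ps M T k F \<longleftrightarrow>
     F \<in> borel_measurable M \<and> (\<forall>x\<in>space M. cmod (F x) = 1) \<and>
     (\<forall>hs. length hs = k \<longrightarrow> set hs \<subseteq> G_set I ps \<longrightarrow>
        (AE x in M. foldr (Delta T) hs F x = 1))"

end

theory Submission
  imports Defs
begin

text \<open>For g in G the derivative Delta_g F is a phase polynomial of degree
  < k - 1 with values in C_(p^m), so by induction (Delta_g F)^p is a.e. a constant c_g.
  If p g = 0, then Delta_g^p F = 1 because p >= k. Writing Delta_g F = mu w with mu^p = c_g,
  w takes p-th roots of unity along each orbit of g, and since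
  (-1)^(p-1-j) (p-1 choose j) = 1 mod p, the binomial expansion of Delta_g^(p-1) w collapses
  to the product of w over the orbit, which telescopes to 1/c_g; hence c_g = 1. For general g
  some r coprime to p satisfies p (r g) = 0, and c_(r g) = c_g^r together with c_g^(p^m) = 1
  again gives c_g = 1. So F^p is G-invariant, hence a.e. constant by ergodicity, and it
  remains to multiply F by a p-th root of the inverse of that constant.\<close>

lemma binomial_prime_minus_one_dvd:
  fixes p :: nat
  assumes "prime p" "j < p"
  shows "int p dvd int ((p - 1) choose j) - (-1) ^ j"
  using assms(2)
proof (induction j)
  case 0
  then show ?case by simp
next
  case (Suc j)
  have "p choose Suc j = ((p - 1) choose j) + ((p - 1) choose Suc j)"
    using binomial_Suc_Suc[of "p - 1" j] prime_gt_0_nat[OF assms(1)] by simp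
  moreover have "p dvd p choose Suc j"
    using dvd_choose_prime[of "Suc j" p] Suc.prems assms(1) by simp
  ultimately have "int p dvd int ((p - 1) choose j) + int ((p - 1) choose Suc j)"
    by (metis int_dvd_int_iff of_nat_add)
  moreover have "int p dvd int ((p - 1) choose j) - (-1) ^ j"
    using Suc by simp
  ultimately have "int p dvd (int ((p - 1) choose j) + int ((p - 1) choose Suc j))
      - (int ((p - 1) choose j) - (-1) ^ j)"
    by (rule dvd_diff)
  then show ?case by (simp add: algebra_simps)
qed

lemma alternating_binomial_prime_minus_one_dvd:
  fixes p :: nat
  assumes "prime p" "j \<le> p - 1"
  shows "int p dvd (-1) ^ (p - 1 - j) * int ((p - 1) choose j) - 1"
proof -
  have p_pos: "p > 0" using prime_gt_0_nat[OF assms(1)] .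
  have "j < p" using assms(2) p_pos by linarith
  have "int p dvd (-1) ^ (p - 1) - 1"
  proof (cases "p = 2")
    case True
    then show ?thesis by simp
  next
    case False
    then have "p > 2" using prime_ge_2_nat[OF assms(1)] by linarith
    then have "odd p" using assms(1) prime_odd_nat by blast
    then have "even (p - 1)" using p_pos by simp
    then show ?thesis by simp
  qed
  moreover have "int p dvd (-1) ^ (p - 1 - j) * (int ((p - 1) choose j) - (-1) ^ j)"
    using binomial_prime_minus_one_dvd[OF assms(1) \<open>j < p\<close>] by simp
  moreover have "p - 1 - j + j = p - 1" using assms(2) by simp
  then have "(-1 :: int) ^ (p - 1 - j) * (-1) ^ j = (-1) ^ (p - 1)" by (metis power_add)
  then have "(-1) ^ (p - 1 - j) * int ((p - 1) choose j) - 1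
      = (-1) ^ (p - 1 - j) * (int ((p - 1) choose j) - (-1) ^ j) + ((-1) ^ (p - 1) - 1)"
    by (simp add: algebra_simps)
  ultimately show ?thesis by (metis dvd_add)
qed

lemma power_int_eq_if_root_of_unity:
  fixes w :: "'a :: field"
  assumes "w ^ p = 1" "int p dvd e - e'"
  shows "w powi e = w powi e'"
proof (cases "p = 0")
  case True
  then show ?thesis using assms(2) by simp
next
  case False
  then have "w \<noteq> 0" using assms(1) by (metis power_0_left zero_neq_one)
  obtain t where "e = e' + int p * t" using assms(2) by (metis dvdE diff_add_cancel add.commute)
  then show ?thesis
    using \<open>w \<noteq> 0\<close> assms(1) by (simp add: power_int_add power_int_mult power_int_of_nat)
qed

lemma power_eq_1_coprime:
  fixes z :: "'a :: monoid_mult"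
  assumes "z ^ r = 1" "z ^ q = 1" "coprime r q"
  shows "z = 1"
proof (cases "r = 0")
  case True
  then show ?thesis using assms by simp
next
  case False
  obtain x y where "r * x = q * y + 1"
    using bezout_nat[OF False, of q] assms(3) by auto
  then have "z ^ (r * x) = z ^ (q * y) * z" by (simp add: power_add power_commutes)
  then show ?thesis using assms(1,2) by (simp add: power_mult)
qed

lemma unimodular_root_inverse:
  fixes c :: complex
  assumes "cmod c = 1" "n > 0"
  shows "\<exists>z. cmod z = 1 \<and> z ^ n * c = 1"
proof -
  obtain z where z: "inverse c = z ^ n"
    using exists_complex_root assms(2) by (metis not_gr0)
  then have "cmod z ^ n = 1" using assms(1) by (metis norm_inverse norm_power inverse_1)
  then have "cmod z = 1" using assms(2) power_eq_imp_eq_base[of "cmod z" n 1] by simp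
  moreover have "z ^ n * c = 1" using z assms(1) by (metis left_inverse norm_zero zero_neq_one)
  ultimately show ?thesis by blast
qed

lemma Delta_replicate_Suc:
  "foldr (Delta T) (replicate (Suc n) h) f = foldr (Delta T) (replicate n h) (Delta T h f)"
  by (induction n) auto

lemma Delta_divide_const:
  assumes "c \<noteq> 0"
  shows "Delta T h (\<lambda>y. \<phi> y / c) = Delta T h \<phi>"
  using assms by (simp add: Delta_def fun_eq_iff)

lemma prod_Delta_funpow_telescope:
  assumes "\<forall>y. f y \<noteq> 0"
  shows "(\<Prod>j<n. Delta T h f ((T h ^^ j) x)) = f ((T h ^^ n) x) / f x"
  using prod_lessThan_telescope[of n "\<lambda>j. f ((T h ^^ j) x)"] assms
  by (simp add: Delta_def)

lemma alternating_binomial_Suc: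
  assumes "j \<le> Suc n"
  shows "(-1::int) ^ (Suc n - j) * int (Suc n choose j)
    = (if j = 0 then 0 else (-1) ^ (n - (j - 1)) * int (n choose (j - 1)))
      - (-1) ^ (n - j) * int (n choose j)"
proof (cases j)
  case 0
  then show ?thesis by simp
next
  case (Suc i)
  show ?thesis
  proof (cases "i = n")
    case True
    then show ?thesis using Suc by simp
  next
    case False
    then have "n - i = Suc (n - Suc i)" using Suc assms by simp
    then show ?thesis using Suc by (simp add: algebra_simps)
  qed
qed

lemma Delta_replicate_eq_prod:
  assumes "\<forall>y. f y \<noteq> 0"
  shows "foldr (Delta T) (replicate n h) f x =
    (\<Prod>j\<le>n. f ((T h ^^ j) x) powi ((-1) ^ (n - j) * int (n choose j)))"
proof (induction n arbitrary: x)
  case 0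
  then show ?case by simp
next
  case (Suc n)
  define e where "e n j = ((-1::int) ^ (n - j) * int (n choose j))" for n j
  define a where "a j = f ((T h ^^ j) x)" for j
  have a_nonzero: "a j \<noteq> 0" for j using assms by (simp add: a_def)
  have shifted: "(\<Prod>j\<le>n. f ((T h ^^ j) (T h x)) powi e n j)
      = (\<Prod>j\<le>Suc n. a j powi (if j = 0 then 0 else e n (j - 1)))"
    by (simp add: prod.atMost_Suc_shift a_def funpow_Suc_right del: prod.atMost_Suc funpow.simps)
  have unshifted: "(\<Prod>j\<le>n. f ((T h ^^ j) x) powi e n j) = (\<Prod>j\<le>Suc n. a j powi e n j)"
    by (simp add: a_def e_def binomial_eq_0)
  have "foldr (Delta T) (replicate (Suc n) h) f x
      = foldr (Delta T) (replicate n h) f (T h x) / foldr (Delta T) (replicate n h) f x"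
    by (simp add: Delta_def)
  also have "\<dots> = (\<Prod>j\<le>Suc n. a j powi (if j = 0 then 0 else e n (j - 1)) / a j powi e n j)"
    using Suc.IH[of "T h x"] Suc.IH[of x] shifted unshifted by (simp add: e_def prod_dividef)
  also have "\<dots> = (\<Prod>j\<le>Suc n. a j powi e (Suc n) j)"
    using a_nonzero alternating_binomial_Suc
    by (intro prod.cong refl) (simp add: e_def flip: power_int_diff)
  finally show ?case by (simp add: a_def e_def)
qed

lemma Delta_replicate_prime_minus_one_root_of_unity:
  assumes "prime p" "\<forall>y. w y \<noteq> 0" "\<forall>j<p. w ((T h ^^ j) x) ^ p = 1"
  shows "foldr (Delta T) (replicate (p - 1) h) w x = (\<Prod>j<p. w ((T h ^^ j) x))"
proof -
  have "{..p - 1} = {..<p}" using prime_gt_0_nat[OF assms(1)] by auto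
  moreover have "w ((T h ^^ j) x) powi ((-1) ^ (p - 1 - j) * int ((p - 1) choose j))
      = w ((T h ^^ j) x)" if "j < p" for j
  proof -
    have "int p dvd (-1) ^ (p - 1 - j) * int ((p - 1) choose j) - 1"
      using alternating_binomial_prime_minus_one_dvd[OF assms(1)] that by simp
    then show ?thesis
      using power_int_eq_if_root_of_unity[OF assms(3)[rule_format, OF that]] by simp
  qed
  ultimately show ?thesis
    using Delta_replicate_eq_prod[OF assms(2), of T "p - 1" h x] by simp
qed

lemma Delta_power_const_eq_1_on_periodic_orbit:
  assumes p: "prime p" and F_nonzero: "\<forall>y. F y \<noteq> 0"
    and periodic: "(T h ^^ p) x = x"
    and Delta_p: "foldr (Delta T) (replicate p h) F x = 1"
    and const: "\<forall>j<p. Delta T h F ((T h ^^ j) x) ^ p = c"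
  shows "c = 1"
proof -
  define U where "U = Delta T h F"
  have U_nonzero: "U y \<noteq> 0" for y using F_nonzero by (simp add: U_def Delta_def)
  have "c \<noteq> 0"
    using const U_nonzero[of x] prime_gt_0_nat[OF p] by (auto simp: U_def)
  then obtain \<mu> where "\<mu> \<noteq> 0" and \<mu>: "c = \<mu> ^ p"
    using exists_complex_root_nonzero prime_gt_0_nat[OF p] by (metis not_gr0)
  define w where "w = (\<lambda>y. U y / \<mu>)"
  have w_root: "\<forall>j<p. w ((T h ^^ j) x) ^ p = 1"
    using const \<mu> \<open>\<mu> \<noteq> 0\<close> by (simp add: w_def U_def power_divide)
  \<comment> \<open>Delta ignores the constant factor \<mu>, and p \<ge> 2 leaves a Delta to absorb it.\<close>
  have "foldr (Delta T) (replicate p h) F = foldr (Delta T) (replicate (p - 1) h) w"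
  proof -
    have "p = Suc (Suc (p - 2))" using prime_ge_2_nat[OF p] by simp
    then have "foldr (Delta T) (replicate p h) F
        = foldr (Delta T) (replicate (p - 2) h) (Delta T h U)"
      by (metis Delta_replicate_Suc U_def)
    also have "\<dots> = foldr (Delta T) (replicate (Suc (p - 2)) h) w"
      unfolding w_def Delta_replicate_Suc Delta_divide_const[OF \<open>\<mu> \<noteq> 0\<close>] ..
    also have "Suc (p - 2) = p - 1" using prime_ge_2_nat[OF p] by simp
    finally show ?thesis .
  qed
  moreover have "\<forall>y. w y \<noteq> 0" using U_nonzero \<open>\<mu> \<noteq> 0\<close> by (simp add: w_def)
  ultimately have "(\<Prod>j<p. w ((T h ^^ j) x)) = 1"
    using Delta_p Delta_replicate_prime_minus_one_root_of_unity[of p w T h x] p w_root by simp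
  have "1 = F ((T h ^^ p) x) / F x" using periodic F_nonzero by simp
  also have "\<dots> = (\<Prod>j<p. \<mu> * w ((T h ^^ j) x))"
    using prod_Delta_funpow_telescope[OF F_nonzero] \<open>\<mu> \<noteq> 0\<close> by (simp add: w_def U_def)
  also have "\<dots> = c"
    using \<open>(\<Prod>j<p. w ((T h ^^ j) x)) = 1\<close> \<mu> by (simp add: prod.distrib)
  finally show ?thesis by simp
qed

definition G_smult :: "(nat \<Rightarrow> nat) \<Rightarrow> nat \<Rightarrow> (nat \<Rightarrow> int) \<Rightarrow> nat \<Rightarrow> int" where
  "G_smult ps n g = (\<lambda>i. (int n * g i) mod int (ps i))"

lemma G_smult_0: "G_smult ps 0 g = (\<lambda>_. 0)"
  by (simp add: G_smult_def)

lemma G_smult_Suc: "G_smult ps (Suc n) g = G_add ps g (G_smult ps n g)"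
  by (simp add: G_smult_def G_add_def fun_eq_iff mod_add_right_eq algebra_simps)

lemma G_smult_in_G_set:
  assumes "\<forall>i\<in>I. ps i > 0" "g \<in> G_set I ps"
  shows "G_smult ps n g \<in> G_set I ps"
proof -
  have "{i. G_smult ps n g i \<noteq> 0} \<subseteq> {i. g i \<noteq> 0}" by (auto simp: G_smult_def)
  then have "finite {i. G_smult ps n g i \<noteq> 0}"
    using assms(2) finite_subset by (auto simp: G_set_def)
  then show ?thesis using assms by (simp add: G_set_def G_smult_def)
qed

lemma G_smult_coprime_times_prime_eq_0:
  assumes "\<forall>i\<in>I. prime (ps i)" "prime p" "g \<in> G_set I ps"
  shows "\<exists>r. coprime r p \<and> G_smult ps (r * p) g = (\<lambda>_. 0)"
proof (intro exI conjI)
  define S where "S = {i. g i \<noteq> 0 \<and> ps i \<noteq> p}"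
  have "S \<subseteq> I" "finite S"
    using assms(3) unfolding G_set_def S_def by (auto intro: finite_subset)
  show "coprime (\<Prod>i\<in>S. ps i) p"
    using \<open>S \<subseteq> I\<close> assms(1,2) by (auto intro!: prod_coprime_left primes_coprime simp: S_def)
  show "G_smult ps ((\<Prod>i\<in>S. ps i) * p) g = (\<lambda>_. 0)"
  proof
    fix i
    have "int (ps i) dvd int ((\<Prod>i\<in>S. ps i) * p) * g i"
    proof (cases "i \<in> S")
      case True
      then have "ps i dvd (\<Prod>i\<in>S. ps i) * p" using \<open>finite S\<close> by (simp add: dvd_prodI)
      then show ?thesis by (simp only: int_dvd_int_iff dvd_mult2)
    next
      case False
      then show ?thesis by (auto simp: S_def)
    qed
    then show "G_smult ps ((\<Prod>i\<in>S. ps i) * p) g i = 0" by (simp add: G_smult_def)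
  qed
qed

locale G_system_over_primes =
  fixes I :: "nat set" and ps :: "nat \<Rightarrow> nat"
    and M :: "'a::metric_space measure" and T :: "(nat \<Rightarrow> int) \<Rightarrow> 'a \<Rightarrow> 'a"
  assumes primes: "\<forall>i\<in>I. prime (ps i)"
    and G_system: "G_system I ps M T"
begin

sublocale prob_space M
  using G_system unfolding G_system_def by blast

lemma space_eq_UNIV: "space M = UNIV"
  using G_system unfolding G_system_def by blast

lemma T_measurable: "g \<in> G_set I ps \<Longrightarrow> T g \<in> M \<rightarrow>\<^sub>M M"
  using G_system unfolding G_system_def by blast

lemma AE_T:
  assumes "g \<in> G_set I ps" "AE x in M. P x"
  shows "AE x in M. P (T g x)"
proof -
  have "distr M M (T g) = M" using G_system assms(1) unfolding G_system_def by blast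
  then show ?thesis using AE_distrD[OF T_measurable[OF assms(1)]] assms(2) by metis
qed

lemma G_smult_in: "g \<in> G_set I ps \<Longrightarrow> G_smult ps n g \<in> G_set I ps"
  using G_smult_in_G_set primes prime_gt_0_nat by blast

lemma T_G_smult:
  assumes "g \<in> G_set I ps"
  shows "T (G_smult ps n g) = T g ^^ n"
proof (induction n)
  case 0
  then show ?case using G_system by (simp add: G_smult_0 G_system_def)
next
  case (Suc n)
  then show ?case
    using G_system assms G_smult_in[OF assms] by (simp add: G_smult_Suc G_system_def)
qed

lemma AE_T_funpow:
  assumes "g \<in> G_set I ps" "AE x in M. P x"
  shows "AE x in M. P ((T g ^^ n) x)"
  using AE_T[OF G_smult_in[OF assms(1)] assms(2), of n] T_G_smult[OF assms(1)] by simp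

lemma funpow_T_coprime_times_prime_eq_id:
  assumes "prime p" "g \<in> G_set I ps"
  shows "\<exists>r. coprime r p \<and> T g ^^ (r * p) = id"
proof -
  obtain r where "coprime r p" "G_smult ps (r * p) g = (\<lambda>_. 0)"
    using G_smult_coprime_times_prime_eq_0[OF primes assms] by blast
  then show ?thesis
    using T_G_smult[OF assms(2)] G_system unfolding G_system_def by metis
qed

lemma phase_poly_norm_eq_1: "phase_poly I ps M T k F \<Longrightarrow> cmod (F x) = 1"
  using space_eq_UNIV unfolding phase_poly_def by blast

lemma phase_poly_nonzero: "phase_poly I ps M T k F \<Longrightarrow> F x \<noteq> 0"
  using phase_poly_norm_eq_1[of k F x] by auto

lemma phase_poly_Delta:
  assumes "phase_poly I ps M T (Suc k) F" "g \<in> G_set I ps"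
  shows "phase_poly I ps M T k (Delta T g F)"
  unfolding phase_poly_def
proof (intro conjI ballI allI impI)
  have "F \<in> borel_measurable M" using assms(1) unfolding phase_poly_def by blast
  then show "Delta T g F \<in> borel_measurable M"
    unfolding Delta_def using T_measurable[OF assms(2)] by measurable
  show "cmod (Delta T g F x) = 1" for x
    using assms(1) space_eq_UNIV by (simp add: phase_poly_def Delta_def norm_divide)
  show "AE x in M. foldr (Delta T) hs (Delta T g F) x = 1"
    if "length hs = k" "set hs \<subseteq> G_set I ps" for hs
  proof -
    have "length (hs @ [g]) = Suc k" "set (hs @ [g]) \<subseteq> G_set I ps"
      using that assms(2) by auto
    then have "AE x in M. foldr (Delta T) (hs @ [g]) F x = 1"
      using assms(1) unfolding phase_poly_def by blast
    then show ?thesis by simp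
  qed
qed

lemma AE_Delta_power_eq_1:
  assumes "g \<in> G_set I ps" "AE x in M. F x ^ q = 1"
  shows "AE x in M. Delta T g F x ^ q = 1"
  using AE_T[OF assms] assms(2) by eventually_elim (simp add: Delta_def power_divide)

lemma AE_Delta_replicate_eq_1:
  assumes "h \<in> G_set I ps" "AE x in M. f x = 1"
  shows "AE x in M. foldr (Delta T) (replicate n h) f x = 1"
proof (induction n)
  case 0
  then show ?case using assms(2) by simp
next
  case (Suc n)
  from AE_T[OF assms(1) Suc] Suc show ?case
    by eventually_elim (simp add: Delta_def)
qed

lemma phase_poly_Delta_replicate:
  assumes "phase_poly I ps M T k F" "k \<le> n" "h \<in> G_set I ps"
  shows "AE x in M. foldr (Delta T) (replicate n h) F x = 1"
proof -
  have "AE x in M. foldr (Delta T) (replicate k h) F x = 1"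
  proof -
    have "set (replicate k h) \<subseteq> G_set I ps" using assms(3) by auto
    moreover have "\<forall>hs. length hs = k \<longrightarrow> set hs \<subseteq> G_set I ps \<longrightarrow>
        (AE x in M. foldr (Delta T) hs F x = 1)"
      using assms(1) unfolding phase_poly_def by blast
    ultimately show ?thesis by (simp del: foldr_replicate)
  qed
  then have "AE x in M. foldr (Delta T) (replicate (n - k) h) (foldr (Delta T) (replicate k h) F) x = 1"
    by (rule AE_Delta_replicate_eq_1[OF assms(3)])
  moreover have "replicate n h = replicate (n - k) h @ replicate k h"
    using assms(2) by (metis replicate_add le_add_diff_inverse2)
  ultimately show ?thesis by simp
qed

lemma Delta_power_const_eq_1_if_periodic:
  assumes "prime p" "phase_poly I ps M T k F" "k \<le> p" "h \<in> G_set I ps" "T h ^^ p = id"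
    and "AE x in M. Delta T h F x ^ p = c"
  shows "c = 1"
proof -
  have "AE x in M. foldr (Delta T) (replicate p h) F x = 1"
    using phase_poly_Delta_replicate assms(2-4) .
  moreover have "AE x in M. \<forall>j\<in>{..<p}. Delta T h F ((T h ^^ j) x) ^ p = c"
    using AE_T_funpow[OF assms(4,6)] by (simp add: eventually_ball_finite_distrib)
  ultimately have "AE x in M. c = 1"
  proof eventually_elim
    case (elim x)
    show ?case
      by (rule Delta_power_const_eq_1_on_periodic_orbit[OF assms(1)])
        (use elim assms(5) phase_poly_nonzero[OF assms(2)] in auto)
  qed
  then show ?thesis by simp
qed

lemma AE_Delta_G_smult_power:
  assumes "g \<in> G_set I ps" "\<forall>y. F y \<noteq> 0" "AE x in M. Delta T g F x ^ q = c"
  shows "AE x in M. Delta T (G_smult ps n g) F x ^ q = c ^ n"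
proof -
  have "AE x in M. \<forall>j\<in>{..<n}. Delta T g F ((T g ^^ j) x) ^ q = c"
    using AE_T_funpow[OF assms(1,3)] by (simp add: eventually_ball_finite_distrib)
  then show ?thesis
  proof eventually_elim
    case (elim x)
    have "Delta T (G_smult ps n g) F x = (\<Prod>j<n. Delta T g F ((T g ^^ j) x))"
      using prod_Delta_funpow_telescope[OF assms(2)] T_G_smult[OF assms(1)] by (simp add: Delta_def)
    then show ?case using elim by (simp add: prod_power_distrib)
  qed
qed

lemma Delta_power_const_eq_1:
  assumes "prime p" "phase_poly I ps M T k F" "k \<le> p" "AE x in M. F x ^ (p ^ m) = 1"
    and "g \<in> G_set I ps" "AE x in M. Delta T g F x ^ p = c"
  shows "c = 1"
proof -
  obtain r where "coprime r p" and r_p: "T g ^^ (r * p) = id"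
    using funpow_T_coprime_times_prime_eq_id assms(1,5) by blast
  define h where "h = G_smult ps r g"
  have "T h ^^ p = id" using T_G_smult[OF assms(5)] r_p by (simp add: h_def funpow_mult)
  moreover have "AE x in M. Delta T h F x ^ p = c ^ r"
    unfolding h_def
    by (rule AE_Delta_G_smult_power[OF assms(5) _ assms(6)]) (use phase_poly_nonzero[OF assms(2)] in blast)
  moreover have "h \<in> G_set I ps" unfolding h_def by (rule G_smult_in[OF assms(5)])
  ultimately have "c ^ r = 1"
    using Delta_power_const_eq_1_if_periodic[OF assms(1-3)] by blast
  moreover have "c ^ (p ^ m) = 1"
  proof -
    have "AE x in M. c ^ (p ^ m) = 1"
      using AE_Delta_power_eq_1[OF assms(5,4)] assms(6)
      by eventually_elim (metis power_mult mult.commute power_one)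
    then show ?thesis by simp
  qed
  moreover have "coprime r (p ^ m)" using \<open>coprime r p\<close> by simp
  ultimately show "c = 1" by (rule power_eq_1_coprime)
qed

lemma phase_poly_power_AE_const:
  assumes "ergodic I ps M T" "prime p"
  shows "phase_poly I ps M T k F \<Longrightarrow> k \<le> p \<Longrightarrow> AE x in M. F x ^ (p ^ m) = 1
    \<Longrightarrow> \<exists>c. AE x in M. F x ^ p = c"
proof (induction k arbitrary: F)
  case 0
  have "\<forall>hs. length hs = 0 \<longrightarrow> set hs \<subseteq> G_set I ps \<longrightarrow>
      (AE x in M. foldr (Delta T) hs F x = 1)"
    using "0.prems"(1) unfolding phase_poly_def by blast
  then have "AE x in M. F x ^ p = 1" by (simp add: eventually_mono)
  then show ?case by blast
next
  case (Suc k)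
  have "AE x in M. F (T g x) ^ p = F x ^ p" if g: "g \<in> G_set I ps" for g
  proof -
    have "phase_poly I ps M T k (Delta T g F)" by (rule phase_poly_Delta[OF Suc.prems(1) g])
    moreover have "AE x in M. Delta T g F x ^ (p ^ m) = 1"
      using AE_Delta_power_eq_1[OF g Suc.prems(3)] .
    moreover have "k \<le> p" using Suc.prems(2) by simp
    ultimately obtain c where c: "AE x in M. Delta T g F x ^ p = c"
      using Suc.IH by blast
    moreover have "c = 1" using Delta_power_const_eq_1[OF assms(2) Suc.prems(1,2,3) g c] .
    ultimately have "AE x in M. Delta T g F x ^ p = 1" by simp
    then show ?thesis
      by eventually_elim (use phase_poly_nonzero[OF Suc.prems(1)] in \<open>simp add: Delta_def power_divide\<close>)
  qed
  moreover have "F \<in> borel_measurable M" using Suc.prems(1) unfolding phase_poly_def by blast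
  then have "(\<lambda>x. F x ^ p) \<in> borel_measurable M" by measurable
  ultimately show ?case using assms(1) unfolding ergodic_def by blast
qed

end

theorem theoremB9:
  fixes I :: "nat set" and ps :: "nat \<Rightarrow> nat"
    and M :: "'a::metric_space measure" and T :: "(nat \<Rightarrow> int) \<Rightarrow> 'a \<Rightarrow> 'a"
    and F :: "'a \<Rightarrow> complex" and k p m :: nat
  assumes "\<forall>i\<in>I. prime (ps i)"
    and "G_system I ps M T"
    and "ergodic I ps M T"
    and "phase_poly I ps M T k F"
    and "prime p" and "p \<ge> k"
    and "AE x in M. F x ^ (p ^ m) = 1"
  shows "\<exists>c. cmod c = 1 \<and> (AE x in M. (c * F x) ^ p = 1)"
proof -
  interpret G_system_over_primes I ps M T
    using assms(1,2) by unfold_locales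
  obtain c0 where c0: "AE x in M. F x ^ p = c0"
    using phase_poly_power_AE_const[OF assms(3,5,4,6,7)] by blast
  then have "AE x in M. cmod c0 = 1"
    by eventually_elim (metis phase_poly_norm_eq_1[OF assms(4)] norm_power power_one)
  then obtain c where "cmod c = 1" "c ^ p * c0 = 1"
    using unimodular_root_inverse prime_gt_0_nat[OF assms(5)] by auto
  moreover have "AE x in M. (c * F x) ^ p = 1"
    using c0 by eventually_elim (use \<open>c ^ p * c0 = 1\<close> in \<open>simp add: power_mult_distrib\<close>)
  ultimately show ?thesis by blast
qed

end
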